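(* Let $\pi\in S_n$ be a cycle of length $l\ge2$ (with the remaining $n-l$ points fixed). Then $$\det(S_\pi)=\begin{cases}-1,& l=2,\\ 2,& l \text{ odd},\\ -4,& l=4k+2\text{ for some integer }k\ge1,\\ 0,& l=4k\text{ for some integer }k\ge1.\end{cases}$$
   Context: For $\theta\in S_n$, $S_\theta$ is the $n\times n$ symmetric $0/1$ matrix with $(S_\theta)_{ij}=1$ if $\theta(i)=j$ or $\theta^{-1}(i)=j$, and $0$ otherwise. *)

theory Defs
  imports "HOL-Analysis.Analysis" "HOL-Combinatorics.Cycles"
begin

definition S_mat :: "('n::finite \<Rightarrow> 'n) \<Rightarrow> real^'n^'n" where
  "S_mat \<theta> = (\<chi> i j. if \<theta> i = j \<or> inv \<theta> i = j then 1 else 0)"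

end

theory Submission
  imports Defs
begin

text \<open>Expanding the determinant, only the permutations p with p x \<in> {\<pi> x, \<pi>\<inverse> x} for every x
  contribute, each with its sign. Along the cycle c_0, ..., c_(l-1) such a p steps either forward
  or backward at each point, and injectivity forces it to step the same way at c_k and c_(k+2).
  Hence for odd l only \<pi> and \<pi>\<inverse> remain, both of sign 1; for l = 2 they coincide and have
  sign -1; for even l \<ge> 4 there are in addition the perfect matching {c_0 c_1, c_2 c_3, ...} and
  its conjugate by \<pi>, each of sign (-1)^(l/2), while \<pi> and \<pi>\<inverse> have sign -1.\<close>

lemma det_indicator_matrix:
  fixes P :: "'n::finite \<Rightarrow> 'n \<Rightarrow> bool"
  shows "det (\<chi> i j. if P i j then 1 else (0::'a::comm_ring_1))
       = (\<Sum>p | p permutes UNIV \<and> (\<forall>i. P i (p i)). of_int (sign p))"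
proof -
  let ?A = "\<chi> i j. if P i j then 1 else (0::'a)"
  have "det ?A = (\<Sum>p | p permutes UNIV. of_int (sign p) * (\<Prod>i\<in>UNIV. ?A $ i $ p i))"
    unfolding det_def ..
  also have "\<dots> = (\<Sum>p | p permutes UNIV \<and> (\<forall>i. P i (p i)). of_int (sign p) * (\<Prod>i\<in>UNIV. ?A $ i $ p i))"
  proof (rule sum.mono_neutral_right)
    show "\<forall>p \<in> {p. p permutes UNIV} - {p. p permutes UNIV \<and> (\<forall>i. P i (p i))}.
            of_int (sign p) * (\<Prod>i\<in>UNIV. ?A $ i $ p i) = 0"
    proof
      fix p assume "p \<in> {p. p permutes UNIV} - {p. p permutes UNIV \<and> (\<forall>i. P i (p i))}"
      then obtain i where "\<not> P i (p i)" by blast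
      then have "(\<Prod>i\<in>UNIV. ?A $ i $ p i) = 0" by (intro prod_zero) auto
      then show "of_int (sign p) * (\<Prod>i\<in>UNIV. ?A $ i $ p i) = 0" by simp
    qed
  qed (auto simp: finite_permutations)
  also have "\<dots> = (\<Sum>p | p permutes UNIV \<and> (\<forall>i. P i (p i)). of_int (sign p))"
    by (rule sum.cong) auto
  finally show ?thesis .
qed

definition S_perms :: "('a \<Rightarrow> 'a) \<Rightarrow> ('a \<Rightarrow> 'a) set" where
  "S_perms \<theta> = {p. p permutes UNIV \<and> (\<forall>x. p x = \<theta> x \<or> p x = inv \<theta> x)}"

lemma S_perms_permutes: "p \<in> S_perms \<theta> \<Longrightarrow> p permutes UNIV"
  unfolding S_perms_def by blast

lemma S_perms_cases: "p \<in> S_perms \<theta> \<Longrightarrow> p x = \<theta> x \<or> p x = inv \<theta> x"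
  unfolding S_perms_def by blast

lemma det_S_mat: "det (S_mat \<theta>) = of_int (\<Sum>p\<in>S_perms \<theta>. sign p)"
proof -
  have "{p. p permutes UNIV \<and> (\<forall>i. \<theta> i = p i \<or> inv \<theta> i = p i)} = S_perms \<theta>"
    unfolding S_perms_def by (rule Collect_cong) metis
  then show ?thesis unfolding S_mat_def det_indicator_matrix of_int_sum by simp
qed

lemma conj_in_S_perms:
  assumes "bij \<theta>" and "p \<in> S_perms \<theta>"
  shows "\<theta> \<circ> p \<circ> inv \<theta> \<in> S_perms \<theta>"
proof -
  have "(\<theta> \<circ> p \<circ> inv \<theta>) permutes UNIV"
    using assms(1) permutes_bij[OF S_perms_permutes[OF assms(2)]]
    by (intro bij_imp_permutes) (auto simp: bij_comp bij_imp_bij_inv)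
  moreover have "(\<theta> \<circ> p \<circ> inv \<theta>) x = \<theta> x \<or> (\<theta> \<circ> p \<circ> inv \<theta>) x = inv \<theta> x" for x
  proof -
    have \<theta>_inv: "\<theta> (inv \<theta> y) = y" for y using assms(1) by (simp add: bij_is_surj surj_f_inv_f)
    from S_perms_cases[OF assms(2), of "inv \<theta> x"] show ?thesis by (auto simp: \<theta>_inv)
  qed
  ultimately show ?thesis unfolding S_perms_def by blast
qed

lemma sign_conj:
  assumes "permutation \<theta>" and "permutation p"
  shows "sign (\<theta> \<circ> p \<circ> inv \<theta>) = sign p"
  using assms by (simp add: sign_compose sign_inverse permutation_compose permutation_inverse)

lemma sign_cycle_of_list:
  "distinct cs \<Longrightarrow> cs \<noteq> [] \<Longrightarrow> sign (cycle_of_list cs) = (-1) ^ (length cs - 1)"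
proof (induction cs rule: cycle_of_list.induct)
  case (1 i j cs)
  have "sign (cycle_of_list (i # j # cs)) = sign (Transposition.transpose i j) * sign (cycle_of_list (j # cs))"
    by (simp add: sign_compose permutation_swap_id permutation_of_cycle)
  also have "\<dots> = (-1) ^ (length (i # j # cs) - 1)"
    using 1 by (simp add: sign_swap_id)
  finally show ?case .
qed auto

fun swap_pairs :: "'a list \<Rightarrow> 'a \<Rightarrow> 'a" where
  "swap_pairs (a # b # xs) = Transposition.transpose a b \<circ> swap_pairs xs"
| "swap_pairs _ = id"

lemma permutation_swap_pairs: "permutation (swap_pairs xs)"
  by (induction xs rule: swap_pairs.induct)
    (simp_all only: swap_pairs.simps permutation_compose permutation_swap_id permutation_id)

lemma swap_pairs_outside: "x \<notin> set xs \<Longrightarrow> swap_pairs xs x = x"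
  by (induction xs rule: swap_pairs.induct) auto

lemma sign_swap_pairs: "distinct xs \<Longrightarrow> sign (swap_pairs xs) = (-1) ^ (length xs div 2)"
proof (induction xs rule: swap_pairs.induct)
  case (1 a b xs)
  have "sign (swap_pairs (a # b # xs)) = sign (Transposition.transpose a b) * sign (swap_pairs xs)"
    by (simp add: sign_compose permutation_swap_id permutation_swap_pairs)
  also have "\<dots> = (-1) ^ (length (a # b # xs) div 2)"
    using 1 by (simp add: sign_swap_id)
  finally show ?case .
qed auto

lemma swap_pairs_nth:
  assumes "distinct xs" and "even (length xs)" and "i < length xs"
  shows "swap_pairs xs (xs ! i) = xs ! (if even i then Suc i else i - 1)"
  using assms
proof (induction xs arbitrary: i rule: swap_pairs.induct)
  case (1 a b xs)
  show ?case
  proof (cases "i \<le> 1")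
    case True
    then consider "i = 0" | "i = 1" by linarith
    then show ?thesis using 1 by cases (auto simp: swap_pairs_outside)
  next
    case False
    then obtain j where j: "i = Suc (Suc j)" by (metis Suc_pred less_Suc0 not_le not_less_eq One_nat_def)
    have "j < length xs" and "even (length xs)" using 1 j by simp_all
    moreover have IH: "swap_pairs xs (xs ! j) = xs ! (if even j then Suc j else j - 1)"
      using 1 \<open>j < length xs\<close> by simp
    ultimately have "xs ! (if even j then Suc j else j - 1) \<in> set xs"
      by (auto intro!: nth_mem) presburger
    moreover have "a \<notin> set xs" "b \<notin> set xs" using 1 by auto
    ultimately have "swap_pairs (a # b # xs) ((a # b # xs) ! i) = xs ! (if even j then Suc j else j - 1)"
      using IH j by (auto simp: transpose_eq_iff)
    then show ?thesis using j False by (cases j) auto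
  qed
qed auto

locale list_cycle =
  fixes cs :: "'a list"
  assumes distinct_cs: "distinct cs" and length_ge_2: "2 \<le> length cs"
begin

abbreviation \<pi> :: "'a \<Rightarrow> 'a" where "\<pi> \<equiv> cycle_of_list cs"

lemma length_pos: "0 < length cs"
  using length_ge_2 by linarith

definition pt :: "nat \<Rightarrow> 'a" where "pt k = cs ! (k mod length cs)"

lemma pt_eq_iff: "pt a = pt b \<longleftrightarrow> a mod length cs = b mod length cs"
  using distinct_cs length_pos by (simp add: pt_def nth_eq_iff_index_eq)

lemma pt_add_length [simp]: "pt (k + length cs) = pt k"
  by (simp add: pt_def)

lemma pt_nth: "k < length cs \<Longrightarrow> pt k = cs ! k"
  by (simp add: pt_def)

lemma set_cs_eq: "set cs = range pt"
proof -
  have "pt k \<in> set cs" for k using length_pos by (simp add: pt_def)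
  moreover have "x \<in> range pt" if "x \<in> set cs" for x
    using that by (metis in_set_conv_nth pt_nth rangeI)
  ultimately show ?thesis by blast
qed

lemma pt_Suc_length_pred: "pt (Suc (k + length cs - 1)) = pt k"
proof -
  have "Suc (k + length cs - 1) = k + length cs" using length_pos by simp
  then show ?thesis by simp
qed

lemma pt_Suc_Suc_neq: "3 \<le> length cs \<Longrightarrow> pt (Suc (Suc k)) \<noteq> pt k"
proof
  assume "3 \<le> length cs" and "pt (Suc (Suc k)) = pt k"
  then have "(k + 2) mod length cs = k mod length cs" by (simp add: pt_eq_iff)
  then have "length cs dvd 2" by (simp add: mod_eq_dvd_iff_nat)
  with \<open>3 \<le> length cs\<close> show False using dvd_imp_le[of "length cs" 2] by simp
qed

lemma cycle_pt [simp]: "\<pi> (pt k) = pt (Suc k)"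
proof -
  have "map \<pi> cs = rotate1 cs" using cyclic_rotation[OF distinct_cs, of 1] length_pos by auto
  then have "\<pi> (cs ! (k mod length cs)) = rotate1 cs ! (k mod length cs)"
    using length_pos by (metis length_map mod_less_divisor nth_map)
  also have "\<dots> = pt (Suc k)" using length_pos by (simp add: pt_def nth_rotate1 mod_Suc_eq)
  finally show ?thesis unfolding pt_def .
qed

lemma bij_cycle: "bij \<pi>"
  by (simp add: permutation_bijective permutation_of_cycle)

lemma inv_cycle_pt [simp]: "inv \<pi> (pt (Suc k)) = pt k"
  by (rule inv_f_eq[OF bij_is_inj[OF bij_cycle]]) simp

lemma cycle_outside: "x \<notin> set cs \<Longrightarrow> \<pi> x = x \<and> inv \<pi> x = x"
  using permutes_not_in[OF cycle_permutes, of x cs] permutes_not_in[OF permutes_inv[OF cycle_permutes], of x cs]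
  by simp

lemma cycle_in_S_perms: "\<pi> \<in> S_perms \<pi>"
  using permutes_subset[OF cycle_permutes subset_UNIV] by (auto simp: S_perms_def)

lemma inv_cycle_in_S_perms: "inv \<pi> \<in> S_perms \<pi>"
  using permutes_inv[OF permutes_subset[OF cycle_permutes subset_UNIV]] by (auto simp: S_perms_def)

lemma S_perms_outside: "p \<in> S_perms \<pi> \<Longrightarrow> x \<notin> set cs \<Longrightarrow> p x = x"
  using S_perms_cases[of p \<pi> x] cycle_outside[of x] by auto

definition forward :: "('a \<Rightarrow> 'a) \<Rightarrow> nat \<Rightarrow> bool" where
  "forward p k \<longleftrightarrow> p (pt k) = pt (Suc k)"

lemma S_perms_backward:
  "p \<in> S_perms \<pi> \<Longrightarrow> \<not> forward p (Suc k) \<Longrightarrow> p (pt (Suc k)) = pt k"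
  using S_perms_cases[of p \<pi> "pt (Suc k)"] by (auto simp: forward_def)

lemma S_perms_eqI:
  assumes p: "p \<in> S_perms \<pi>" and q: "q \<in> S_perms \<pi>" and "\<And>k. forward p k = forward q k"
  shows "p = q"
proof
  fix x
  show "p x = q x"
  proof (cases "x \<in> set cs")
    case True
    then obtain m where "x = pt m" by (auto simp: set_cs_eq)
    then have x: "x = pt (Suc (m + length cs - 1))" by (simp only: pt_Suc_length_pred)
    show ?thesis
    proof (cases "forward p (Suc (m + length cs - 1))")
      case True
      with assms(3) show ?thesis unfolding x by (simp add: forward_def)
    next
      case False
      with assms(3) show ?thesis unfolding x using S_perms_backward[OF p] S_perms_backward[OF q] by metis
    qed
  qed (simp add: S_perms_outside p q)
qed

lemma forward_mod: "a mod length cs = b mod length cs \<Longrightarrow> forward p a = forward p b"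
  unfolding forward_def by (metis pt_eq_iff mod_Suc_eq)

lemma forward_add_2:
  assumes "3 \<le> length cs" and p: "p \<in> S_perms \<pi>" and "forward p k"
  shows "forward p (k + 2)"
proof (rule ccontr)
  assume "\<not> forward p (k + 2)"
  then have "p (pt (Suc (Suc k))) = p (pt k)"
    using S_perms_backward[OF p, of "Suc k"] \<open>forward p k\<close> by (simp add: forward_def)
  moreover have "inj p" using permutes_inj[OF S_perms_permutes[OF p]] .
  ultimately show False using pt_Suc_Suc_neq[OF assms(1)] by (simp add: inj_eq)
qed

lemma forward_add_even:
  assumes "3 \<le> length cs" and "p \<in> S_perms \<pi>" and "forward p k"
  shows "forward p (k + 2 * j)"
proof (induction j)
  case (Suc j)
  then have "forward p (k + 2 * j + 2)" by (rule forward_add_2[OF assms(1,2)])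
  then show ?case by (simp add: algebra_simps)
qed (simp add: assms(3))

lemma forward_transfer:
  assumes "3 \<le> length cs" and "p \<in> S_perms \<pi>" and "forward p k"
    and "(k + 2 * j) mod length cs = m mod length cs"
  shows "forward p m"
  using forward_add_even[OF assms(1-3), of j] forward_mod[OF assms(4), of p] by blast

lemma forward_odd_length:
  assumes "3 \<le> length cs" and "odd (length cs)" and "p \<in> S_perms \<pi>" and "forward p k"
  shows "forward p m"
proof -
  obtain h where h: "length cs = 2 * h + 1" using assms(2) oddE by blast
  define j where "j = (h + 1) * (m + 2 * h * k)"
  have "k + 2 * j = m + length cs * (m + 2 * h * k + k)"
    unfolding h j_def by (simp add: algebra_simps)
  then show ?thesis by (intro forward_transfer[OF assms(1,3,4), of j]) simp
qed

lemma forward_even_length: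
  assumes "3 \<le> length cs" and "even (length cs)" and "p \<in> S_perms \<pi>" and "forward p k"
    and "even (m + k)"
  shows "forward p m"
proof -
  have "\<exists>h. length cs = 2 * h + 2" using assms(1,2) by presburger
  then obtain h where h: "length cs = 2 * h + 2" ..
  obtain t where t: "m + k = 2 * t" using assms(5) by blast
  define j where "j = t + h * k"
  have "k + 2 * j = m + length cs * k"
    unfolding h j_def using t by (simp add: algebra_simps)
  then show ?thesis by (intro forward_transfer[OF assms(1,3,4), of j]) simp
qed

lemma forward_cycle: "forward \<pi> k"
  by (simp add: forward_def)

lemma not_forward_inv_cycle: "3 \<le> length cs \<Longrightarrow> \<not> forward (inv \<pi>) k"
  unfolding forward_def by (metis bij_cycle bij_inv_eq_iff cycle_pt pt_Suc_Suc_neq)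

lemma S_perms_length_2:
  assumes "length cs = 2"
  shows "S_perms \<pi> = {\<pi>}"
proof -
  have "inv \<pi> x = \<pi> x" for x
  proof (cases "x \<in> set cs")
    case True
    then obtain m where "x = pt m" by (auto simp: set_cs_eq)
    then have x: "x = pt (Suc (m + length cs - 1))" by (simp only: pt_Suc_length_pred)
    have "pt (m + length cs - 1) = pt (Suc (Suc (m + length cs - 1)))"
      unfolding pt_eq_iff using assms by simp
    then show ?thesis unfolding x by simp
  qed (simp add: cycle_outside)
  then have "S_perms \<pi> = {p. p permutes UNIV \<and> p = \<pi>}"
    unfolding S_perms_def by (auto simp: fun_eq_iff)
  then show ?thesis
    using permutes_subset[OF cycle_permutes subset_UNIV] by auto
qed

lemma S_perms_odd_length:
  assumes "3 \<le> length cs" and "odd (length cs)"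
  shows "S_perms \<pi> = {\<pi>, inv \<pi>}"
proof
  show "S_perms \<pi> \<subseteq> {\<pi>, inv \<pi>}"
  proof
    fix p assume p: "p \<in> S_perms \<pi>"
    show "p \<in> {\<pi>, inv \<pi>}"
    proof (cases "forward p 0")
      case True
      then have "p = \<pi>"
        using forward_odd_length[OF assms p] forward_cycle by (intro S_perms_eqI p cycle_in_S_perms) blast
      then show ?thesis by simp
    next
      case False
      then have "p = inv \<pi>"
        using forward_odd_length[OF assms p] not_forward_inv_cycle[OF assms(1)]
        by (intro S_perms_eqI p inv_cycle_in_S_perms) blast
      then show ?thesis by simp
    qed
  qed
qed (simp add: cycle_in_S_perms inv_cycle_in_S_perms)

lemma forward_even_length_iff:
  assumes "3 \<le> length cs" and "even (length cs)" and "p \<in> S_perms \<pi>"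
  shows "forward p k \<longleftrightarrow> forward p (k mod 2)"
proof -
  have "even (k mod 2 + k)" by presburger
  then show ?thesis using forward_even_length[OF assms] by (metis add.commute)
qed

lemma S_perms_eqI_even_length:
  assumes "3 \<le> length cs" and "even (length cs)" and p: "p \<in> S_perms \<pi>" and q: "q \<in> S_perms \<pi>"
    and "forward p 0 = forward q 0" and "forward p 1 = forward q 1"
  shows "p = q"
proof (rule S_perms_eqI[OF p q])
  fix k :: nat
  have "k mod 2 = 0 \<or> k mod 2 = 1" by presburger
  then show "forward p k = forward q k"
    using assms(5,6) forward_even_length_iff[OF assms(1,2) p, of k] forward_even_length_iff[OF assms(1,2) q, of k]
    by auto
qed

lemma swap_pairs_in_S_perms:
  assumes "even (length cs)"
  shows "swap_pairs cs \<in> S_perms \<pi>"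
proof -
  have "swap_pairs cs permutes UNIV"
    by (intro bij_imp_permutes) (simp_all add: permutation_bijective permutation_swap_pairs)
  moreover have "swap_pairs cs x = \<pi> x \<or> swap_pairs cs x = inv \<pi> x" for x
  proof (cases "x \<in> set cs")
    case True
    then obtain i where i: "i < length cs" and x: "x = pt i" by (auto simp: in_set_conv_nth pt_nth)
    show ?thesis
    proof (cases "even i")
      case True
      then have "Suc i < length cs" using i assms by presburger
      then have "swap_pairs cs x = pt (Suc i)"
        using swap_pairs_nth[OF distinct_cs assms i] True i by (simp add: x pt_nth)
      then show ?thesis by (simp add: x)
    next
      case False
      then have "swap_pairs cs x = pt (i - 1)"
        using swap_pairs_nth[OF distinct_cs assms i] i by (simp add: x pt_nth)
      moreover have "x = pt (Suc (i - 1))" using False x by (simp add: odd_pos)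
      ultimately show ?thesis by simp
    qed
  qed (simp add: swap_pairs_outside cycle_outside)
  ultimately show ?thesis unfolding S_perms_def by blast
qed

lemma forward_swap_pairs:
  assumes "3 \<le> length cs" and "even (length cs)"
  shows "forward (swap_pairs cs) 0" and "\<not> forward (swap_pairs cs) 1"
proof -
  have "2 < length cs" using assms(1) by simp
  then show "forward (swap_pairs cs) 0"
    using swap_pairs_nth[OF distinct_cs assms(2), of 0] length_pos by (simp add: forward_def pt_nth)
  have "swap_pairs cs (pt 1) = pt 0"
    using swap_pairs_nth[OF distinct_cs assms(2), of 1] \<open>2 < length cs\<close> length_pos by (simp add: pt_nth)
  then show "\<not> forward (swap_pairs cs) 1"
    using pt_Suc_Suc_neq[OF assms(1), of 0] by (simp add: forward_def numeral_2_eq_2)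
qed

lemma forward_conj_cycle: "forward (\<pi> \<circ> p \<circ> inv \<pi>) (Suc k) \<longleftrightarrow> forward p k"
  unfolding forward_def using bij_cycle by (simp add: bij_is_inj inj_eq flip: cycle_pt)

lemma forward_conj_swap_pairs:
  assumes "3 \<le> length cs" and "even (length cs)"
  shows "\<not> forward (\<pi> \<circ> swap_pairs cs \<circ> inv \<pi>) 0" and "forward (\<pi> \<circ> swap_pairs cs \<circ> inv \<pi>) 1"
proof -
  have "forward (\<pi> \<circ> swap_pairs cs \<circ> inv \<pi>) 0 = forward (\<pi> \<circ> swap_pairs cs \<circ> inv \<pi>) (Suc (length cs - 1))"
    using length_pos by (intro forward_mod) simp
  also have "\<dots> = forward (swap_pairs cs) (length cs - 1)"
    by (rule forward_conj_cycle)
  also have "\<dots> = forward (swap_pairs cs) ((length cs - 1) mod 2)"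
    by (rule forward_even_length_iff[OF assms swap_pairs_in_S_perms[OF assms(2)]])
  also have "(length cs - 1) mod 2 = 1" using assms length_pos by presburger
  finally show "\<not> forward (\<pi> \<circ> swap_pairs cs \<circ> inv \<pi>) 0" using forward_swap_pairs(2)[OF assms] by blast
  show "forward (\<pi> \<circ> swap_pairs cs \<circ> inv \<pi>) 1"
    using forward_conj_cycle[of _ 0] forward_swap_pairs[OF assms] by simp
qed

lemma S_perms_even_length:
  assumes "3 \<le> length cs" and "even (length cs)"
  shows "S_perms \<pi> = {\<pi>, inv \<pi>, swap_pairs cs, \<pi> \<circ> swap_pairs cs \<circ> inv \<pi>}"
proof
  have in_S: "swap_pairs cs \<in> S_perms \<pi>" "\<pi> \<circ> swap_pairs cs \<circ> inv \<pi> \<in> S_perms \<pi>"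
    using swap_pairs_in_S_perms[OF assms(2)] conj_in_S_perms[OF bij_cycle] by auto
  then show "{\<pi>, inv \<pi>, swap_pairs cs, \<pi> \<circ> swap_pairs cs \<circ> inv \<pi>} \<subseteq> S_perms \<pi>"
    by (simp add: cycle_in_S_perms inv_cycle_in_S_perms)
  show "S_perms \<pi> \<subseteq> {\<pi>, inv \<pi>, swap_pairs cs, \<pi> \<circ> swap_pairs cs \<circ> inv \<pi>}"
  proof
    fix p assume p: "p \<in> S_perms \<pi>"
    note eqI = S_perms_eqI_even_length[OF assms p]
    consider "forward p 0" "forward p 1" | "\<not> forward p 0" "\<not> forward p 1"
      | "forward p 0" "\<not> forward p 1" | "\<not> forward p 0" "forward p 1"
      by blast
    then show "p \<in> {\<pi>, inv \<pi>, swap_pairs cs, \<pi> \<circ> swap_pairs cs \<circ> inv \<pi>}"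
    proof cases
      case 1
      then show ?thesis using eqI[OF cycle_in_S_perms] forward_cycle by simp
    next
      case 2
      then show ?thesis using eqI[OF inv_cycle_in_S_perms] not_forward_inv_cycle[OF assms(1)] by simp
    next
      case 3
      then show ?thesis using eqI[OF in_S(1)] forward_swap_pairs[OF assms] by simp
    next
      case 4
      then show ?thesis using eqI[OF in_S(2)] forward_conj_swap_pairs[OF assms] by simp
    qed
  qed
qed

lemma sign_cycle: "sign \<pi> = (-1) ^ (length cs - 1)"
  using sign_cycle_of_list[OF distinct_cs] length_pos by auto

lemma sum_sign_S_perms_length_2: "length cs = 2 \<Longrightarrow> (\<Sum>p\<in>S_perms \<pi>. sign p) = -1"
  by (simp add: S_perms_length_2 sign_cycle)

lemma sum_sign_S_perms_odd_length:
  assumes "3 \<le> length cs" and "odd (length cs)"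
  shows "(\<Sum>p\<in>S_perms \<pi>. sign p) = 2"
proof -
  have "\<pi> \<noteq> inv \<pi>" using forward_cycle not_forward_inv_cycle[OF assms(1)] by metis
  moreover have "sign \<pi> = 1" using assms(2) length_pos by (simp add: sign_cycle)
  ultimately show ?thesis
    by (simp add: S_perms_odd_length[OF assms] sign_inverse permutation_of_cycle)
qed

lemma sum_sign_S_perms_even_length:
  assumes "3 \<le> length cs" and "even (length cs)"
  shows "(\<Sum>p\<in>S_perms \<pi>. sign p) = -2 + 2 * (-1) ^ (length cs div 2)"
proof -
  let ?m = "swap_pairs cs" and ?m' = "\<pi> \<circ> swap_pairs cs \<circ> inv \<pi>"
  note fw = forward_cycle not_forward_inv_cycle[OF assms(1)]
    forward_swap_pairs[OF assms] forward_conj_swap_pairs[OF assms]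
  have "\<pi> \<noteq> inv \<pi>" "\<pi> \<noteq> ?m" "\<pi> \<noteq> ?m'" "inv \<pi> \<noteq> ?m" "inv \<pi> \<noteq> ?m'" "?m \<noteq> ?m'"
    using fw by metis+
  moreover have "sign \<pi> = -1" using assms(2) length_pos by (simp add: sign_cycle)
  moreover have "sign ?m = (-1) ^ (length cs div 2)" "sign ?m' = (-1) ^ (length cs div 2)"
    by (simp_all add: sign_swap_pairs[OF distinct_cs] sign_conj permutation_of_cycle permutation_swap_pairs)
  ultimately show ?thesis
    by (simp add: S_perms_even_length[OF assms] sign_inverse permutation_of_cycle)
qed

end

theorem mainTheorem12:
  fixes \<pi> :: "'n::finite \<Rightarrow> 'n" and cs :: "'n list" and l :: nat
  assumes "distinct cs" and "length cs = l" and "l \<ge> 2"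
    and "\<pi> = cycle_of_list cs"
  shows "(l = 2 \<longrightarrow> det (S_mat \<pi>) = -1)
       \<and> (odd l \<longrightarrow> det (S_mat \<pi>) = 2)
       \<and> ((\<exists>k::nat. k \<ge> 1 \<and> l = 4*k + 2) \<longrightarrow> det (S_mat \<pi>) = -4)
       \<and> ((\<exists>k::nat. k \<ge> 1 \<and> l = 4*k) \<longrightarrow> det (S_mat \<pi>) = 0)"
proof -
  interpret list_cycle cs using assms(1-3) by unfold_locales simp_all
  have det: "det (S_mat \<pi>) = of_int (\<Sum>p\<in>S_perms (cycle_of_list cs). sign p)"
    unfolding assms(4) by (rule det_S_mat)
  show ?thesis
  proof (intro conjI impI)
    assume "l = 2"
    then show "det (S_mat \<pi>) = -1" using det sum_sign_S_perms_length_2 assms(2) by simp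
  next
    assume "odd l"
    then have "3 \<le> l" using assms(3) by presburger
    then show "det (S_mat \<pi>) = 2" using det sum_sign_S_perms_odd_length \<open>odd l\<close> assms(2) by simp
  next
    assume "\<exists>k::nat. k \<ge> 1 \<and> l = 4*k + 2"
    then have "3 \<le> l" "even l" "odd (l div 2)" by presburger+
    then show "det (S_mat \<pi>) = -4" using det sum_sign_S_perms_even_length assms(2) by simp
  next
    assume "\<exists>k::nat. k \<ge> 1 \<and> l = 4*k"
    then have "3 \<le> l" "even l" "even (l div 2)" by presburger+
    then show "det (S_mat \<pi>) = 0" using det sum_sign_S_perms_even_length assms(2) by simp
  qed
qed

end
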